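(* Let $F=\{\mathbb{R}^{n};f_{1},\dots,f_{m}\}$ be an IFS of contractive similitudes (at least two distinct maps) that obeys the open set condition, with contraction factors $\lambda_i=s^{a_i}$ where $s=\max_i\lambda_i$, and take costs $c_{l}=a_{l}$ for all $l\in\{1,\dots,m\}$. Let $\mathbf{i},\mathbf{j}\in\Sigma^{\infty}$ and $p,q\in\mathbb{N}$ be such that $\sigma^{p}\mathbf{i}=\sigma^{q}\mathbf{j}$ and $c(\mathbf{i}|p)=c(\mathbf{j}|q)$. Then for every closed $T\subset\mathbb{R}^n$, \[ \Pi_{T}(\mathbf{i})=E\,\Pi_{T}(\mathbf{j}),\qquad E=f_{i_{1}}^{-1}\circ\cdots\circ f_{i_{p}}^{-1}\circ f_{j_{q}}\circ\cdots\circ f_{j_{1}}. \]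
   Context: An IFS $F$ consists of maps $f_{i}:\mathbb{R}^{n}\to\mathbb{R}^{n}$ with $|f_{i}(x)-f_{i}(y)|=\lambda_{i}|x-y|$, $\lambda_{i}\in(0,1)$. $F$ obeys the open set condition if there is a nonempty open $O$ with $f_i(O)\subset O$ for all $i$ and $f_{i}(O)\cap f_{j}(O)=\emptyset$ for $i\neq j$. Let $\Sigma=\{1,\dots,m\}$, $\Sigma^{\infty}$ the infinite sequences over $\Sigma$, and $\sigma:\Sigma^\infty\to\Sigma^\infty$ the shift $\sigma(i_1i_2i_3\dots)=i_2i_3\dots$. For $\mathbf{i}\in\Sigma^{\infty}$: $\mathbf{i}|k=i_{1}\dots i_{k}$, $\mathbf{i}|0=\emptyset$, $f_{(\mathbf{j}|l)}=f_{j_{1}}\circ\cdots\circ f_{j_{l}}$, $f_{-(\mathbf{i}|k)}=f_{i_{1}}^{-1}\circ\cdots\circ f_{i_{k}}^{-1}$, $c(\mathbf{i}|k)=c_{i_{1}}+\cdots+c_{i_{k}}$, $c(\emptyset)=0$; \[ \Pi_{T}(\mathbf{i}|k)=f_{-(\mathbf{i}|k)}\big(\{f_{(\mathbf{j}|l)}(T):\mathbf{j}\in\Sigma^{\infty},\ l\in\mathbb{N},\ c(\mathbf{j}|l-1)\leq c(\mathbf{i}|k)<c(\mathbf{j}|l)\}\big),\quad \Pi_{T}(\mathbf{i})=\bigcup_{k\geq1}\Pi_{T}(\mathbf{i}|k). \] A map applied to a collection of sets is applied to each member. *)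

theory Defs
  imports "HOL-Analysis.Analysis"
begin

text \<open>Infinite sequences over the alphabet {1..m} are functions nat => nat;
  the letter i_k (k >= 1) of a sequence w is w (k - 1).\<close>

definition seqs :: "nat \<Rightarrow> (nat \<Rightarrow> nat) set" where
  "seqs m = {w. \<forall>k. w k \<in> {1..m}}"

definition trunc :: "(nat \<Rightarrow> nat) \<Rightarrow> nat \<Rightarrow> nat list" where
  "trunc w k = map w [0..<k]"

definition shift_pow :: "nat \<Rightarrow> (nat \<Rightarrow> nat) \<Rightarrow> (nat \<Rightarrow> nat)" where
  "shift_pow p w = (\<lambda>k. w (k + p))"

fun wcomp :: "(nat \<Rightarrow> 'a \<Rightarrow> 'a) \<Rightarrow> nat list \<Rightarrow> 'a \<Rightarrow> 'a" where
  "wcomp f [] = id"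
| "wcomp f (a # u) = f a \<circ> wcomp f u"

fun winvcomp :: "(nat \<Rightarrow> 'a \<Rightarrow> 'a) \<Rightarrow> nat list \<Rightarrow> 'a \<Rightarrow> 'a" where
  "winvcomp f [] = id"
| "winvcomp f (a # u) = inv (f a) \<circ> winvcomp f u"

definition wcost :: "(nat \<Rightarrow> real) \<Rightarrow> nat list \<Rightarrow> real" where
  "wcost c u = sum_list (map c u)"

definition tiles_at :: "nat \<Rightarrow> (nat \<Rightarrow> 'a \<Rightarrow> 'a) \<Rightarrow> (nat \<Rightarrow> real) \<Rightarrow> 'a set \<Rightarrow> real \<Rightarrow> 'a set set" where
  "tiles_at m f c T t =
     {wcomp f (trunc j l) ` T | j l. j \<in> seqs m \<and> l \<ge> 1 \<and>
        wcost c (trunc j (l - 1)) \<le> t \<and> t < wcost c (trunc j l)}"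

definition PiT_word :: "nat \<Rightarrow> (nat \<Rightarrow> 'a \<Rightarrow> 'a) \<Rightarrow> (nat \<Rightarrow> real) \<Rightarrow> 'a set \<Rightarrow> (nat \<Rightarrow> nat) \<Rightarrow> nat \<Rightarrow> 'a set set" where
  "PiT_word m f c T w k =
     (\<lambda>A. winvcomp f (trunc w k) ` A) ` tiles_at m f c T (wcost c (trunc w k))"

definition PiT :: "nat \<Rightarrow> (nat \<Rightarrow> 'a \<Rightarrow> 'a) \<Rightarrow> (nat \<Rightarrow> real) \<Rightarrow> 'a set \<Rightarrow> (nat \<Rightarrow> nat) \<Rightarrow> 'a set set" where
  "PiT m f c T w = (\<Union>k\<in>{1..}. PiT_word m f c T w k)"

end

theory Submission
  imports Defs
begin

(*
  Since sigma^p i = sigma^q j, the words i|(p+r) and j|(q+r) share their last r letters,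
  so E o f_-(j|(q+r)) = f_-(i|(p+r)); since c(i|p) = c(j|q) the two words also have the
  same cost. Hence E maps Pi_T(j|(q+r)) onto Pi_T(i|(p+r)). Moreover Pi_T(w|k) increases
  with k, because f_(w_(k+1)) maps a tile at cost t to a tile at cost t + c_(w_(k+1)),
  so both unions may be taken over these shifted indices only.
  The argument only needs the maps f_l to be bijections, which similitudes of R^n are.
*)

lemma similitude_bij:
  fixes f :: "'a::euclidean_space \<Rightarrow> 'a"
  assumes r: "0 < r" and dist_f: "\<And>x y. dist (f x) (f y) = r * dist x y"
  shows "bij f"
proof -
  define g where "g x = f x - f 0" for x
  have dist_g: "dist (g x) (g y) = r * dist x y" for x y
    using dist_f[of x y] by (simp add: g_def dist_norm)
  have "linear g"
    using dist_g by (intro scaling_linear[where c = r]) (simp_all add: g_def)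
  moreover have "inj g"
    by (rule injI) (metis dist_g dist_eq_0_iff r mult_eq_0_iff less_irrefl)
  ultimately have "surj g"
    using eucl.linear_injective_imp_surjective by blast
  then have "surj f"
    by (metis (no_types, lifting) g_def diff_add_cancel surj_def)
  moreover have "inj f"
    using \<open>inj g\<close> by (auto simp: inj_def g_def)
  ultimately show ?thesis
    by (simp add: bij_def)
qed

lemma wcomp_append: "wcomp f (u @ v) = wcomp f u \<circ> wcomp f v"
  by (induction u) (auto simp: comp_assoc)

lemma winvcomp_append: "winvcomp f (u @ v) = winvcomp f u \<circ> winvcomp f v"
  by (induction u) (auto simp: comp_assoc)

lemma wcomp_rev_winvcomp:
  assumes "\<forall>a\<in>set u. surj (f a)"
  shows "wcomp f (rev u) \<circ> winvcomp f u = id"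
  using assms
proof (induction u)
  case Nil
  then show ?case by simp
next
  case (Cons a u)
  have "wcomp f (rev (a # u)) \<circ> winvcomp f (a # u)
      = wcomp f (rev u) \<circ> (f a \<circ> inv (f a)) \<circ> winvcomp f u"
    by (simp add: wcomp_append comp_assoc)
  also have "\<dots> = id"
    using Cons by (simp add: surj_iff fun_eq_iff)
  finally show ?case .
qed

lemma wcost_append: "wcost c (u @ v) = wcost c u + wcost c v"
  unfolding wcost_def by simp

lemma trunc_Suc: "trunc w (Suc k) = trunc w k @ [w k]"
  unfolding trunc_def by simp

lemma trunc_add: "trunc w (k + r) = trunc w k @ trunc (shift_pow k w) r"
  by (induction r) (simp_all add: trunc_Suc shift_pow_def add.commute, simp add: trunc_def)

lemma set_trunc_seqs: "w \<in> seqs m \<Longrightarrow> set (trunc w k) \<subseteq> {1..m}"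
  unfolding trunc_def seqs_def by auto

lemma trunc_Suc_Cons:
  "trunc (\<lambda>k. if k = 0 then a else w (k - 1)) (Suc n) = a # trunc w n"
  unfolding trunc_def by (simp add: upt_conv_Cons map_Suc_upt[symmetric] del: upt_Suc)

lemma image_tiles_at_subset:
  assumes "a \<in> {1..m}"
  shows "(\<lambda>A. f a ` A) ` tiles_at m f c T t \<subseteq> tiles_at m f c T (t + c a)"
proof
  fix B assume "B \<in> (\<lambda>A. f a ` A) ` tiles_at m f c T t"
  then obtain w l where w: "w \<in> seqs m" "l \<ge> 1" "wcost c (trunc w (l - 1)) \<le> t"
      "t < wcost c (trunc w l)" and B: "B = f a ` wcomp f (trunc w l) ` T"
    unfolding tiles_at_def by auto
  define w' where "w' = (\<lambda>k. if k = 0 then a else w (k - 1))"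
  have "w' \<in> seqs m"
    using w(1) assms unfolding seqs_def w'_def by auto
  moreover have "trunc w' (Suc l) = a # trunc w l" "trunc w' l = a # trunc w (l - 1)"
    using trunc_Suc_Cons[of a w l] trunc_Suc_Cons[of a w "l - 1"] w(2)
    unfolding w'_def by simp_all
  ultimately show "B \<in> tiles_at m f c T (t + c a)"
    unfolding tiles_at_def using w B
    by (auto simp: image_comp wcost_def intro!: exI[of _ w'] exI[of _ "Suc l"])
qed

lemma PiT_word_subset_Suc:
  assumes w: "w \<in> seqs m" and inj: "\<forall>l\<in>{1..m}. inj (f l)"
  shows "PiT_word m f c T w k \<subseteq> PiT_word m f c T w (Suc k)"
proof
  fix X assume "X \<in> PiT_word m f c T w k"
  then obtain A where A: "A \<in> tiles_at m f c T (wcost c (trunc w k))"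
    and X: "X = winvcomp f (trunc w k) ` A"
    unfolding PiT_word_def by auto
  have a: "w k \<in> {1..m}"
    using w unfolding seqs_def by auto
  have "f (w k) ` A \<in> tiles_at m f c T (wcost c (trunc w (Suc k)))"
    using image_tiles_at_subset[OF a] A by (fastforce simp: trunc_Suc wcost_append wcost_def)
  moreover have "winvcomp f (trunc w (Suc k)) ` f (w k) ` A = X"
    using inj a X by (simp add: trunc_Suc winvcomp_append image_comp inj_iff)
  ultimately show "X \<in> PiT_word m f c T w (Suc k)"
    unfolding PiT_word_def by (metis image_eqI)
qed

lemma PiT_eq_UN_shifted:
  assumes "w \<in> seqs m" and "\<forall>l\<in>{1..m}. inj (f l)"
  shows "PiT m f c T w = (\<Union>r\<in>{1..}. PiT_word m f c T w (p + r))"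
proof -
  have mono: "PiT_word m f c T w k \<subseteq> PiT_word m f c T w (p + k)" for k
    using lift_Suc_mono_le[of "PiT_word m f c T w", OF PiT_word_subset_Suc[OF assms]] by simp
  show ?thesis
    unfolding PiT_def
  proof (intro antisym UN_least)
    show "PiT_word m f c T w k \<subseteq> (\<Union>r\<in>{1..}. PiT_word m f c T w (p + r))" if "k \<in> {1..}" for k
      using mono that by blast
    show "PiT_word m f c T w (p + r) \<subseteq> (\<Union>k\<in>{1..}. PiT_word m f c T w k)" if "r \<in> {1..}" for r
      using that by (intro UN_upper) auto
  qed
qed

lemma PiT_word_shift_eq:
  assumes surj: "\<forall>l\<in>{1..m}. surj (f l)" and j: "j \<in> seqs m"
    and shift: "shift_pow p i = shift_pow q j"
    and cost: "wcost c (trunc i p) = wcost c (trunc j q)"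
  defines "E \<equiv> winvcomp f (trunc i p) \<circ> wcomp f (rev (trunc j q))"
  shows "PiT_word m f c T i (p + r) = (\<lambda>A. E ` A) ` PiT_word m f c T j (q + r)"
proof -
  have "E \<circ> winvcomp f (trunc j (q + r))
      = winvcomp f (trunc i p) \<circ> (wcomp f (rev (trunc j q)) \<circ> winvcomp f (trunc j q))
          \<circ> winvcomp f (trunc (shift_pow q j) r)"
    unfolding E_def by (simp add: trunc_add winvcomp_append comp_assoc)
  also have "\<dots> = winvcomp f (trunc i (p + r))"
    using wcomp_rev_winvcomp[of "trunc j q" f] set_trunc_seqs[OF j] surj shift
    by (fastforce simp: trunc_add winvcomp_append)
  finally have maps: "E \<circ> winvcomp f (trunc j (q + r)) = winvcomp f (trunc i (p + r))" .
  have costs: "wcost c (trunc j (q + r)) = wcost c (trunc i (p + r))"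
    using cost shift by (simp add: trunc_add wcost_append)
  show ?thesis
    unfolding PiT_word_def by (simp add: maps[symmetric] costs image_comp comp_def)
qed

theorem theorem2:
  fixes m :: nat
    and f :: "nat \<Rightarrow> real ^ 'n \<Rightarrow> real ^ 'n"
    and lam :: "nat \<Rightarrow> real"
    and a :: "nat \<Rightarrow> real"
    and s :: real
    and c :: "nat \<Rightarrow> real"
    and i j :: "nat \<Rightarrow> nat"
    and p q :: nat
    and T :: "(real ^ 'n) set"
  assumes m2: "m \<ge> 2"
    and sim: "\<And>l x y. l \<in> {1..m} \<Longrightarrow> dist (f l x) (f l y) = lam l * dist x y"
    and lam_range: "\<And>l. l \<in> {1..m} \<Longrightarrow> 0 < lam l \<and> lam l < 1"
    and osc: "\<exists>U. open U \<and> U \<noteq> {} \<and> (\<forall>l\<in>{1..m}. f l ` U \<subseteq> U) \<and>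
               (\<forall>l\<in>{1..m}. \<forall>l'\<in>{1..m}. l \<noteq> l' \<longrightarrow> f l ` U \<inter> f l' ` U = {})"
    and s_def: "s = Max (lam ` {1..m})"
    and lam_pow: "\<And>l. l \<in> {1..m} \<Longrightarrow> lam l = s powr a l"
    and cost: "\<And>l. l \<in> {1..m} \<Longrightarrow> c l = a l"
    and i_seq: "i \<in> seqs m"
    and j_seq: "j \<in> seqs m"
    and shift_eq: "shift_pow p i = shift_pow q j"
    and cost_eq: "wcost c (trunc i p) = wcost c (trunc j q)"
    and T_closed: "closed T"
  shows "PiT m f c T i =
         (\<lambda>A. (winvcomp f (trunc i p) \<circ> wcomp f (rev (trunc j q))) ` A) ` PiT m f c T j"
proof -
  let ?E = "winvcomp f (trunc i p) \<circ> wcomp f (rev (trunc j q))"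
  have bij: "\<forall>l\<in>{1..m}. bij (f l)"
    using similitude_bij sim lam_range by blast
  then have inj: "\<forall>l\<in>{1..m}. inj (f l)" and surj: "\<forall>l\<in>{1..m}. surj (f l)"
    by (simp_all add: bij_def)
  have "PiT m f c T i = (\<Union>r\<in>{1..}. PiT_word m f c T i (p + r))"
    using PiT_eq_UN_shifted[OF i_seq inj] .
  also have "\<dots> = (\<Union>r\<in>{1..}. (\<lambda>A. ?E ` A) ` PiT_word m f c T j (q + r))"
    using PiT_word_shift_eq[OF surj j_seq shift_eq cost_eq] by simp
  also have "\<dots> = (\<lambda>A. ?E ` A) ` PiT m f c T j"
    by (simp add: PiT_eq_UN_shifted[OF j_seq inj, where p = q] image_UN)
  finally show ?thesis .
qed

end
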